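(* For all real numbers $m>0$ and $p>0$, the Harmonic Vase $HV(m,p)\subset\mathbb{R}^3$ is compact.
   Context: Use cylindrical coordinates $(r,\varphi,z)$ on $\mathbb{R}^3$, so that a point has Cartesian coordinates $(r\cos\varphi, r\sin\varphi, z)$, with $\varphi\in[-\pi,\pi]$. For $m,p>0$, the Harmonic Vase $HV(m,p)$ is the union of two sets: (1) the pedestal $\{(x,y,0)\in\mathbb{R}^3 : x^2+y^2\le 9\}$; (2) the wall $W(m,p)=\{(r\cos\varphi, r\sin\varphi, z) : z\in(0,m],\ \varphi\in[-\pi,\pi],\ r=\tfrac{|\varphi|}{\pi}\sin\tfrac{\pi p}{z}+2\}$. *)

theory Defs
  imports "HOL-Analysis.Analysis"
begin

definition pedestal :: "(real \<times> real \<times> real) set" where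
  "pedestal = {(x, y, 0) | x y. x\<^sup>2 + y\<^sup>2 \<le> 9}"

definition vase_wall :: "real \<Rightarrow> real \<Rightarrow> (real \<times> real \<times> real) set" where
  "vase_wall m p = {(r * cos \<phi>, r * sin \<phi>, z) | r \<phi> z.
      z \<in> {0<..m} \<and> \<phi> \<in> {-pi..pi} \<and> r = \<bar>\<phi>\<bar> / pi * sin (pi * p / z) + 2}"

definition harmonic_vase :: "real \<Rightarrow> real \<Rightarrow> (real \<times> real \<times> real) set" where
  "harmonic_vase m p = pedestal \<union> vase_wall m p"

end

theory Submission
  imports Defs
begin

text \<open>The vase lies in the closed solid cylinder of radius 3 and height m, whose bottom face is the
  pedestal, so it is bounded and its limit points at height 0 belong to it. Above any height
  c > 0 the wall is the image of the compact rectangle [-pi, pi] \<times> [c, m] under its continuous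
  parametrization, hence compact; the oscillation of sin (pi p / z) as z \<rightarrow> 0 only produces
  limit points at height 0.\<close>

lemma closed_if_closed_upper_slices:
  fixes S :: "'a::topological_space set" and h :: "'a \<Rightarrow> real"
  assumes h: "continuous_on UNIV h"
    and slices: "\<And>c. c > 0 \<Longrightarrow> closed (S \<inter> {x. c \<le> h x})"
    and bottom: "closure S \<inter> {x. h x \<le> 0} \<subseteq> S"
  shows "closed S"
proof -
  have "l \<in> S" if l: "l \<in> closure S" for l
  proof (cases "h l \<le> 0")
    case True
    then show ?thesis using l bottom by blast
  next
    case False
    define c where "c = h l / 2"
    have c: "c > 0" using False by (simp add: c_def)
    have "open {x. c < h x}"
      using h by (intro open_Collect_less continuous_intros) auto
    then have "{x. c < h x} \<inter> closure S \<subseteq> closure ({x. c < h x} \<inter> S)"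
      by (rule open_Int_closure_subset)
    also have "\<dots> \<subseteq> closure (S \<inter> {x. c \<le> h x})"
      by (intro closure_mono) auto
    also have "\<dots> = S \<inter> {x. c \<le> h x}"
      using slices[OF c] by (rule closure_closed)
    finally show ?thesis using l False by (auto simp: c_def)
  qed
  then show ?thesis by (metis closure_subset_eq subsetI)
qed

definition wall_radius :: "real \<Rightarrow> real \<Rightarrow> real \<Rightarrow> real" where
  "wall_radius p \<phi> z = \<bar>\<phi>\<bar> / pi * sin (pi * p / z) + 2"

definition wall_point :: "real \<Rightarrow> real \<times> real \<Rightarrow> real \<times> real \<times> real" where
  "wall_point p = (\<lambda>(\<phi>, z). (wall_radius p \<phi> z * cos \<phi>, wall_radius p \<phi> z * sin \<phi>, z))"

lemma vase_wall_eq_image: "vase_wall m p = wall_point p ` ({-pi..pi} \<times> {0<..m})"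
  unfolding vase_wall_def wall_point_def wall_radius_def by force

lemma wall_radius_bounds:
  assumes "\<phi> \<in> {-pi..pi}"
  shows "1 \<le> wall_radius p \<phi> z" and "wall_radius p \<phi> z \<le> 3"
proof -
  have "\<bar>\<phi>\<bar> / pi * \<bar>sin (pi * p / z)\<bar> \<le> 1"
    using assms by (intro mult_le_one) (auto simp: field_simps)
  then have "\<bar>\<bar>\<phi>\<bar> / pi * sin (pi * p / z)\<bar> \<le> 1"
    by (simp add: abs_mult)
  then show "1 \<le> wall_radius p \<phi> z" "wall_radius p \<phi> z \<le> 3"
    unfolding wall_radius_def by linarith+
qed

lemma compact_vase_wall_upper_slice:
  assumes "c > 0"
  shows "compact (vase_wall m p \<inter> {q. c \<le> snd (snd q)})"
proof -
  have "vase_wall m p \<inter> {q. c \<le> snd (snd q)} = wall_point p ` cbox (-pi, c) (pi, m)"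
    using assms by (auto simp: vase_wall_eq_image cbox_Pair_eq wall_point_def)
  moreover have "continuous_on (cbox (-pi, c) (pi, m)) (wall_point p)"
    unfolding wall_point_def wall_radius_def case_prod_beta
    using assms by (intro continuous_intros) (auto simp: cbox_Pair_eq)
  ultimately show ?thesis
    by (metis compact_cbox compact_continuous_image)
qed

definition vase_cylinder :: "real \<Rightarrow> (real \<times> real \<times> real) set" where
  "vase_cylinder m = {(x, y, z). x\<^sup>2 + y\<^sup>2 \<le> 9 \<and> 0 \<le> z \<and> z \<le> m}"

lemma closed_vase_cylinder: "closed (vase_cylinder m)"
proof -
  have "vase_cylinder m = {q. (fst q)\<^sup>2 + (fst (snd q))\<^sup>2 \<le> 9} \<inter> {q. 0 \<le> snd (snd q)}
      \<inter> {q. snd (snd q) \<le> m}"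
    by (auto simp: vase_cylinder_def)
  then show ?thesis
    by (simp only:) (intro closed_Int closed_Collect_le continuous_intros)
qed

lemma bounded_vase_cylinder: "bounded (vase_cylinder m)"
proof -
  have "norm q \<le> sqrt (9 + m\<^sup>2)" if q_in: "q \<in> vase_cylinder m" for q
  proof -
    obtain x y z where q: "q = (x, y, z)" "x\<^sup>2 + y\<^sup>2 \<le> 9" "0 \<le> z" "z \<le> m"
      using q_in by (cases q) (auto simp: vase_cylinder_def)
    have "z\<^sup>2 \<le> m\<^sup>2" using q by (simp add: power_mono)
    then have "x\<^sup>2 + (y\<^sup>2 + z\<^sup>2) \<le> 9 + m\<^sup>2" using q by linarith
    then show ?thesis using q by (simp add: norm_Pair)
  qed
  then show ?thesis unfolding bounded_iff by blast
qed

lemma harmonic_vase_subset_cylinder: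
  assumes "m \<ge> 0"
  shows "harmonic_vase m p \<subseteq> vase_cylinder m"
proof -
  have "(r * cos \<phi>)\<^sup>2 + (r * sin \<phi>)\<^sup>2 = r\<^sup>2" for r \<phi> :: real
    by (simp add: power_mult_distrib flip: distrib_left)
  moreover have "(wall_radius p \<phi> z)\<^sup>2 \<le> 3\<^sup>2" if "\<phi> \<in> {-pi..pi}" for \<phi> z
    using wall_radius_bounds[OF that, of p z] by (intro power_mono) auto
  ultimately show ?thesis
    using assms unfolding harmonic_vase_def pedestal_def vase_wall_eq_image vase_cylinder_def
    by (auto simp: wall_point_def)
qed

lemma vase_cylinder_bottom: "vase_cylinder m \<inter> {q. snd (snd q) \<le> 0} \<subseteq> pedestal"
  by (auto simp: vase_cylinder_def pedestal_def)

theorem mainTheorem2: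
  fixes m p :: real
  assumes "m > 0" and "p > 0"
  shows "compact (harmonic_vase m p)"
proof -
  let ?H = "harmonic_vase m p"
  have cylinder: "?H \<subseteq> vase_cylinder m"
    using assms(1) by (simp add: harmonic_vase_subset_cylinder)
  have "?H \<inter> {q. c \<le> snd (snd q)} = vase_wall m p \<inter> {q. c \<le> snd (snd q)}" if "c > 0" for c
    using that by (auto simp: harmonic_vase_def pedestal_def)
  then have slices: "closed (?H \<inter> {q. c \<le> snd (snd q)})" if "c > 0" for c
    using that by (simp add: compact_vase_wall_upper_slice compact_imp_closed)
  have "closure ?H \<subseteq> vase_cylinder m"
    using cylinder closed_vase_cylinder by (rule closure_minimal)
  then have bottom: "closure ?H \<inter> {q. snd (snd q) \<le> 0} \<subseteq> ?H"
    using vase_cylinder_bottom by (fastforce simp: harmonic_vase_def)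
  have "closed ?H"
    by (rule closed_if_closed_upper_slices[OF _ slices bottom]) (intro continuous_intros)
  moreover have "bounded ?H"
    using bounded_vase_cylinder cylinder by (rule bounded_subset)
  ultimately show ?thesis by (simp add: compact_eq_bounded_closed)
qed

end
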